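(* Let $F$ be a field of characteristic zero and let $A$ be a $\#$-superalgebra over $F$. Then for every $n\geq 1$, $$c_n^{grs}(A)\leq 4^n c_n(A).$$
   Context: All algebras are associative over $F$. A superalgebra is $A=A_0\oplus A_1$ with $A_iA_j\subseteq A_{(i+j)\bmod 2}$; $\deg a=i$ for $0\ne a\in A_i$. A superinvolution is an $F$-linear map $\#:A\to A$ with $A_i^\#\subseteq A_i$, $(c^\#)^\#=c$ and $(ab)^\#=(-1)^{\deg a\deg b}b^\#a^\#$ for homogeneous $a,b$; a graded involution is an $F$-linear map $\#$ with $A_i^\#\subseteq A_i$, $(c^\#)^\#=c$, $(ab)^\#=b^\#a^\#$. A $\#$-superalgebra is a superalgebra with a superinvolution or a graded involution $\#$. Put $A_i^{+}=\{a\in A_i:a^\#=a\}$, $A_i^-=\{a\in A_i:a^\#=-a\}$. Let $\mathcal F$ be the free non-unital associative algebra on $X=Y_0\cup Z_0\cup Y_1\cup Z_1$, $Y_i=\{y_{i,1},y_{i,2},\dots\}$, $Z_i=\{z_{i,1},z_{i,2},\dots\}$, where variables in $Y_i\cup Z_i$ have $\mathbb Z_2$-degree $i$, and $\#$ is defined by $y_{i,j}^\#=y_{i,j}$, $z_{i,j}^\#=-z_{i,j}$ and, on monomials, $(x_{i_1}\cdots x_{i_k})^\#=(-1)^{s(s-1)/2}x_{i_k}^\#\cdots x_{i_1}^\#$ ($s$ = number of odd variables) in the superinvolution case, resp. $(x_{i_1}\cdots x_{i_k})^\#=x_{i_k}^\#\cdots x_{i_1}^\#$ in the graded involution case, extended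 linearly. A polynomial $f\in\mathcal F$ is a $\#$-superidentity of $A$ if it vanishes under every substitution of variables $y_{0,j},z_{0,j},y_{1,j},z_{1,j}$ by elements of $A_0^+,A_0^-,A_1^+,A_1^-$ respectively; $Id_2^\#(A)$ is the set of these. $P_n^{grs}$ is the span of all monomials $w_{\sigma(1)}\cdots w_{\sigma(n)}$, $\sigma\in S_n$, $w_i\in\{y_{0,i},z_{0,i},y_{1,i},z_{1,i}\}$, and $c_n^{grs}(A)=\dim P_n^{grs}/(P_n^{grs}\cap Id_2^\#(A))$. $P_n$ is the space of ordinary multilinear polynomials in $x_1,\dots,x_n$, $Id(A)$ the ordinary polynomial identities of $A$, and $c_n(A)=\dim P_n/(P_n\cap Id(A))$. *)

theory Defs
  imports Complex_Main "HOL-Library.FuncSet" "HOL-Library.Function_Algebras" "HOL-Combinatorics.Permutations"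
begin

fun mprod :: "'a::semigroup_mult list \<Rightarrow> 'a" where
  "mprod [] = undefined"
| "mprod [x] = x"
| "mprod (x # y # xs) = x * mprod (y # xs)"

definition sharp_superalgebra ::
  "('f::field \<Rightarrow> 'a::ring \<Rightarrow> 'a) \<Rightarrow> 'a set \<Rightarrow> 'a set \<Rightarrow> ('a \<Rightarrow> 'a) \<Rightarrow> bool" where
  "sharp_superalgebra smul A0 A1 sh \<longleftrightarrow>
     vector_space smul \<and>
     (\<forall>c a b. smul c (a * b) = smul c a * b \<and> smul c (a * b) = a * smul c b) \<and>
     module.subspace smul A0 \<and> module.subspace smul A1 \<and>
     A0 \<inter> A1 = {0} \<and> (\<forall>a. \<exists>a0\<in>A0. \<exists>a1\<in>A1. a = a0 + a1) \<and>
     (\<forall>a\<in>A0. \<forall>b\<in>A0. a * b \<in> A0) \<and> (\<forall>a\<in>A0. \<forall>b\<in>A1. a * b \<in> A1) \<and>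
     (\<forall>a\<in>A1. \<forall>b\<in>A0. a * b \<in> A1) \<and> (\<forall>a\<in>A1. \<forall>b\<in>A1. a * b \<in> A0) \<and>
     Vector_Spaces.linear smul smul sh \<and> sh ` A0 \<subseteq> A0 \<and> sh ` A1 \<subseteq> A1 \<and>
     (\<forall>a. sh (sh a) = a) \<and>
     ( \<comment> \<open>superinvolution\<close>
       ((\<forall>a\<in>A0. \<forall>b\<in>A0 \<union> A1. sh (a * b) = sh b * sh a) \<and>
        (\<forall>a\<in>A1. \<forall>b\<in>A0. sh (a * b) = sh b * sh a) \<and>
        (\<forall>a\<in>A1. \<forall>b\<in>A1. sh (a * b) = - (sh b * sh a)))
     \<or> \<comment> \<open>graded involution\<close>
       (\<forall>a b. sh (a * b) = sh b * sh a))"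

definition fdim :: "('i \<Rightarrow> 'f::field) set \<Rightarrow> nat" where
  "fdim V = vector_space.dim (\<lambda>(c::'f) (f::'i \<Rightarrow> 'f) x. c * f x) V"

text \<open>Ordinary multilinear polynomials P_n: the element
  sum_sigma f(sigma) x_{sigma(0)} ... x_{sigma(n-1)} is encoded by its coefficient
  function f on permutations of {0..<n} (variables indexed from 0).\<close>
definition Pn :: "nat \<Rightarrow> ((nat \<Rightarrow> nat) \<Rightarrow> 'f::field) set" where
  "Pn n = {f. \<forall>\<sigma>. \<not> \<sigma> permutes {..<n} \<longrightarrow> f \<sigma> = 0}"

definition eval_ord :: "('f::field \<Rightarrow> 'a::ring \<Rightarrow> 'a) \<Rightarrow> nat \<Rightarrow> ((nat \<Rightarrow> nat) \<Rightarrow> 'f) \<Rightarrow> (nat \<Rightarrow> 'a) \<Rightarrow> 'a" where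
  "eval_ord smul n f a = (\<Sum>\<sigma> \<in> {\<sigma>. \<sigma> permutes {..<n}}. smul (f \<sigma>) (mprod (map (\<lambda>j. a (\<sigma> j)) [0..<n])))"

definition IdPn :: "('f::field \<Rightarrow> 'a::ring \<Rightarrow> 'a) \<Rightarrow> nat \<Rightarrow> ((nat \<Rightarrow> nat) \<Rightarrow> 'f) set" where
  "IdPn smul n = {f \<in> Pn n. \<forall>a. eval_ord smul n f a = 0}"

text \<open>c_n(A) = dim P_n/(P_n \<inter> Id(A)) = dim P_n - dim (P_n \<inter> Id(A)).\<close>
definition cn :: "('f::field \<Rightarrow> 'a::ring \<Rightarrow> 'a) \<Rightarrow> nat \<Rightarrow> nat" where
  "cn smul n = fdim (Pn n :: ((nat \<Rightarrow> nat) \<Rightarrow> 'f) set) - fdim (IdPn smul n)"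

datatype vkind = Y0 | Z0 | Y1 | Z1

definition kind_space :: "'a set \<Rightarrow> 'a set \<Rightarrow> ('a \<Rightarrow> 'a) \<Rightarrow> vkind \<Rightarrow> 'a::ab_group_add set" where
  "kind_space A0 A1 sh k = (case k of
      Y0 \<Rightarrow> {a \<in> A0. sh a = a} | Z0 \<Rightarrow> {a \<in> A0. sh a = - a}
    | Y1 \<Rightarrow> {a \<in> A1. sh a = a} | Z1 \<Rightarrow> {a \<in> A1. sh a = - a})"

text \<open>Index set of the monomial basis of P_n^{grs}: a permutation sigma and a choice
  t(i) of the kind of w_i for each i < n; the monomial is
  w_{sigma(0)} ... w_{sigma(n-1)} with w_i of kind t(i).\<close>
definition GIdx :: "nat \<Rightarrow> ((nat \<Rightarrow> nat) \<times> (nat \<Rightarrow> vkind)) set" where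
  "GIdx n = {\<sigma>. \<sigma> permutes {..<n}} \<times> ({..<n} \<rightarrow>\<^sub>E (UNIV :: vkind set))"

definition GPn :: "nat \<Rightarrow> (((nat \<Rightarrow> nat) \<times> (nat \<Rightarrow> vkind)) \<Rightarrow> 'f::field) set" where
  "GPn n = {f. \<forall>p. p \<notin> GIdx n \<longrightarrow> f p = 0}"

text \<open>Evaluation under the substitution w_i of kind k |-> b i k.\<close>
definition eval_grs :: "('f::field \<Rightarrow> 'a::ring \<Rightarrow> 'a) \<Rightarrow> nat \<Rightarrow>
    (((nat \<Rightarrow> nat) \<times> (nat \<Rightarrow> vkind)) \<Rightarrow> 'f) \<Rightarrow> (nat \<Rightarrow> vkind \<Rightarrow> 'a) \<Rightarrow> 'a" where
  "eval_grs smul n f b = (\<Sum>(\<sigma>, t) \<in> GIdx n.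
      smul (f (\<sigma>, t)) (mprod (map (\<lambda>j. b (\<sigma> j) (t (\<sigma> j))) [0..<n])))"

definition IdGPn :: "('f::field \<Rightarrow> 'a::ring \<Rightarrow> 'a) \<Rightarrow> 'a set \<Rightarrow> 'a set \<Rightarrow> ('a \<Rightarrow> 'a) \<Rightarrow> nat \<Rightarrow>
    (((nat \<Rightarrow> nat) \<times> (nat \<Rightarrow> vkind)) \<Rightarrow> 'f) set" where
  "IdGPn smul A0 A1 sh n = {f \<in> GPn n.
      \<forall>b. (\<forall>i k. b i k \<in> kind_space A0 A1 sh k) \<longrightarrow> eval_grs smul n f b = 0}"

definition cn_grs :: "('f::field \<Rightarrow> 'a::ring \<Rightarrow> 'a) \<Rightarrow> 'a set \<Rightarrow> 'a set \<Rightarrow> ('a \<Rightarrow> 'a) \<Rightarrow> nat \<Rightarrow> nat" where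
  "cn_grs smul A0 A1 sh n =
     fdim (GPn n :: (((nat \<Rightarrow> nat) \<times> (nat \<Rightarrow> vkind)) \<Rightarrow> 'f) set) - fdim (IdGPn smul A0 A1 sh n)"

end

theory Submission
  imports Defs
begin

text \<open>A choice \<open>t\<close> of kinds for the variables turns each \<open>f \<in> P\<^sub>n\<close> into an element of
  \<open>P\<^sub>n\<^sup>g\<^sup>r\<^sup>s\<close> (the variable \<open>x\<^sub>i\<close> becomes the one of index \<open>i\<close> and kind \<open>t i\<close>), and
  \<open>P\<^sub>n\<^sup>g\<^sup>r\<^sup>s\<close> is the direct sum of these \<open>4\<^sup>n\<close> copies of \<open>P\<^sub>n\<close>. Evaluating the copy of \<open>f\<close>
  on homogeneous symmetric or skew elements is evaluating \<open>f\<close> on elements of \<open>A\<close>, so the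
  copies of \<open>P\<^sub>n \<inter> Id(A)\<close> consist of \<open>#\<close>-superidentities. Hence
  \<open>dim P\<^sub>n\<^sup>g\<^sup>r\<^sup>s = 4\<^sup>n dim P\<^sub>n\<close> while \<open>dim (P\<^sub>n\<^sup>g\<^sup>r\<^sup>s \<inter> Id\<^sub>2\<^sup>#(A)) \<ge> 4\<^sup>n dim (P\<^sub>n \<inter> Id(A))\<close>.\<close>

interpretation fun_space: vector_space "\<lambda>(c::'f::field) (f::'i \<Rightarrow> 'f) x. c * f x"
  by unfold_locales (simp_all add: fun_eq_iff algebra_simps)

lemma fdim_eq_dim: "fdim V = fun_space.dim V"
  unfolding fdim_def by simp

lemma sum_fun_apply: "(\<Sum>x\<in>A. f x) y = (\<Sum>x\<in>A. f x y)"
  by (induction A rule: infinite_finite_induct) auto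

context vector_space
begin

lemma dim_subset_finite_span:
  assumes "S \<subseteq> T" "T \<subseteq> span W" "finite W"
  shows "dim S \<le> dim T"
proof -
  obtain E where E: "E \<subseteq> T" "independent E" "T \<subseteq> span E" "card E = dim T"
    by (rule basis_exists)
  have "finite E"
    using independent_span_bound[OF assms(3) E(2)] E(1) assms(2) by blast
  then show ?thesis
    using dim_le_card[of S E] assms(1) E(3,4) by auto
qed

end

lemma finite_support_subset_span:
  assumes "finite S"
  shows "{f :: 'i \<Rightarrow> 'f::field. \<forall>x. x \<notin> S \<longrightarrow> f x = 0}
           \<subseteq> fun_space.span ((\<lambda>s x. if x = s then 1 else 0) ` S)"
proof
  fix f :: "'i \<Rightarrow> 'f" assume f: "f \<in> {f. \<forall>x. x \<notin> S \<longrightarrow> f x = 0}"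
  have "f = (\<Sum>s\<in>S. (\<lambda>x. f s * (if x = s then 1 else 0)))"
  proof
    fix x
    have "(\<Sum>s\<in>S. (\<lambda>x. f s * (if x = s then 1 else 0))) x = (if x \<in> S then f x else 0)"
      unfolding sum_fun_apply using assms by (simp add: if_distrib sum.delta cong: if_cong)
    then show "f x = (\<Sum>s\<in>S. (\<lambda>x. f s * (if x = s then 1 else 0))) x"
      using f by auto
  qed
  also have "\<dots> \<in> fun_space.span ((\<lambda>s x. if x = s then 1 else 0) ` S)"
    by (intro fun_space.span_sum fun_space.span_scale fun_space.span_base) auto
  finally show "f \<in> fun_space.span ((\<lambda>s x. if x = s then 1 else 0) ` S)" .
qed

definition slice :: "'k \<Rightarrow> ('i \<times> 'k \<Rightarrow> 'f) \<Rightarrow> 'i \<Rightarrow> 'f" where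
  "slice t g = (\<lambda>s. g (s, t))"

definition embed_slice :: "'k \<Rightarrow> ('i \<Rightarrow> 'f::zero) \<Rightarrow> 'i \<times> 'k \<Rightarrow> 'f" where
  "embed_slice t f = (\<lambda>(s, t'). if t' = t then f s else 0)"

definition slicewise :: "('i \<Rightarrow> 'f::zero) set \<Rightarrow> 'k set \<Rightarrow> ('i \<times> 'k \<Rightarrow> 'f) set" where
  "slicewise V K = {g. (\<forall>s t. t \<notin> K \<longrightarrow> g (s, t) = 0) \<and> (\<forall>t\<in>K. slice t g \<in> V)}"

definition embed_slices :: "'k set \<Rightarrow> ('i \<Rightarrow> 'f::zero) set \<Rightarrow> ('i \<times> 'k \<Rightarrow> 'f) set" where
  "embed_slices K B = (\<lambda>(t, f). embed_slice t f) ` (K \<times> B)"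

lemma slice_embed_slice: "slice t (embed_slice t' f) = (if t' = t then f else 0)"
  by (auto simp: slice_def embed_slice_def fun_eq_iff)

lemma inj_embed_slice: "inj (embed_slice t)"
  by (metis injI slice_embed_slice)

lemma slicewise_eq_sum_embed_slice:
  fixes g :: "'i \<times> 'k \<Rightarrow> 'f::comm_monoid_add"
  assumes "finite K" "g \<in> slicewise V K"
  shows "g = (\<Sum>t\<in>K. embed_slice t (slice t g))"
proof
  fix p :: "'i \<times> 'k"
  obtain s t0 where p: "p = (s, t0)" by force
  have "(\<Sum>t\<in>K. embed_slice t (slice t g)) p = (if t0 \<in> K then g (s, t0) else 0)"
    unfolding p sum_fun_apply using assms(1)
    by (simp add: embed_slice_def slice_def if_distrib sum.delta cong: if_cong)
  then show "g p = (\<Sum>t\<in>K. embed_slice t (slice t g)) p"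
    using assms(2) p by (auto simp: slicewise_def)
qed

lemma embed_slice_in_span:
  fixes B :: "('i \<Rightarrow> 'f::field) set"
  assumes "f \<in> fun_space.span B"
  shows "embed_slice t f \<in> fun_space.span (embed_slice t ` B)"
  using assms
proof (induction rule: fun_space.span_induct_alt)
  case base
  have "embed_slice t (0 :: 'i \<Rightarrow> 'f) = 0"
    by (auto simp: embed_slice_def fun_eq_iff)
  then show ?case
    by (metis fun_space.span_zero)
next
  case (step c x y)
  have "embed_slice t ((\<lambda>s. c * x s) + y) = (\<lambda>p. c * embed_slice t x p) + embed_slice t y"
    by (auto simp: embed_slice_def fun_eq_iff)
  then show ?case
    using step by (metis fun_space.span_add fun_space.span_base fun_space.span_scale imageI)
qed

lemma slicewise_subset_span:
  fixes V B :: "('i \<Rightarrow> 'f::field) set" and K :: "'k set"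
  assumes "finite K" "V \<subseteq> fun_space.span B"
  shows "slicewise V K \<subseteq> fun_space.span (embed_slices K B)"
proof
  fix g assume g: "g \<in> slicewise V K"
  have "embed_slice t (slice t g) \<in> fun_space.span (embed_slices K B)" if "t \<in> K" for t
  proof -
    have "slice t g \<in> fun_space.span B"
      using g that assms(2) by (auto simp: slicewise_def)
    then have "embed_slice t (slice t g) \<in> fun_space.span (embed_slice t ` B)"
      by (rule embed_slice_in_span)
    moreover have "embed_slice t ` B \<subseteq> embed_slices K B"
      using that by (auto simp: embed_slices_def)
    ultimately show ?thesis
      using fun_space.span_mono by blast
  qed
  then show "g \<in> fun_space.span (embed_slices K B)"
    by (subst slicewise_eq_sum_embed_slice[OF assms(1) g]) (rule fun_space.span_sum)
qed

lemma embed_slices_subset_slicewise: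
  assumes "B \<subseteq> V" "0 \<in> V"
  shows "embed_slices K B \<subseteq> slicewise V K"
  using assms by (auto simp: embed_slices_def slicewise_def slice_embed_slice)
    (auto simp: embed_slice_def)

lemma card_embed_slices:
  assumes "0 \<notin> B"
  shows "card (embed_slices K B) = card K * card B"
proof -
  have "inj_on (\<lambda>(t, f). embed_slice t f) (K \<times> B)"
  proof (rule inj_onI, clarify)
    fix t f t' f' assume tf: "f \<in> B" "f' \<in> B" "embed_slice t f = embed_slice t' f'"
    then have "slice t (embed_slice t f) = slice t (embed_slice t' f')" by simp
    then have "t = t'"
      using tf(1) assms by (auto simp: slice_embed_slice split: if_splits)
    then show "t = t' \<and> f = f'"
      using tf(3) inj_embed_slice by (metis injD)
  qed
  then show ?thesis
    unfolding embed_slices_def by (simp add: card_image card_cartesian_product)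
qed

lemma independent_embed_slices:
  fixes B :: "('i \<Rightarrow> 'f::field) set" and K :: "'k set"
  assumes indep: "fun_space.independent B"
  shows "fun_space.independent (embed_slices K B)"
  unfolding fun_space.independent_explicit_module
proof (intro allI impI)
  fix T u w
  assume T: "finite T" "T \<subseteq> embed_slices K B"
    and comb: "(\<Sum>v\<in>T. (\<lambda>x. u v * v x)) = 0" and w: "w \<in> T"
  obtain t0 f0 where w0: "w = embed_slice t0 f0" "f0 \<in> B"
    using w T(2) by (auto simp: embed_slices_def)
  define S where "S = embed_slice t0 -` T \<inter> B"
  have "finite S"
    unfolding S_def using T(1) inj_embed_slice by (intro finite_Int disjI1 finite_vimageI)
  have "(\<Sum>f\<in>S. (\<lambda>x. u (embed_slice t0 f) * f x)) = 0"
  proof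
    fix s
    have "(\<Sum>f\<in>S. (\<lambda>x. u (embed_slice t0 f) * f x)) s
        = (\<Sum>v\<in>embed_slice t0 ` S. u v * v (s, t0))"
      unfolding sum_fun_apply sum.reindex[OF inj_on_subset[OF inj_embed_slice subset_UNIV]]
      by (simp add: embed_slice_def)
    also have "\<dots> = (\<Sum>v\<in>T. u v * v (s, t0))"
    proof (rule sum.mono_neutral_left[OF T(1)])
      show "embed_slice t0 ` S \<subseteq> T"
        unfolding S_def by auto
      show "\<forall>v\<in>T - embed_slice t0 ` S. u v * v (s, t0) = 0"
      proof
        fix v assume v: "v \<in> T - embed_slice t0 ` S"
        then obtain t f where tf: "v = embed_slice t f" "f \<in> B"
          using T(2) by (auto simp: embed_slices_def)
        with v have "t \<noteq> t0"
          by (auto simp: S_def)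
        then show "u v * v (s, t0) = 0"
          using tf(1) by (simp add: embed_slice_def)
      qed
    qed
    also have "\<dots> = 0"
      using fun_cong[OF comb, of "(s, t0)"] by (simp add: sum_fun_apply)
    finally show "(\<Sum>f\<in>S. (\<lambda>x. u (embed_slice t0 f) * f x)) s = 0 s"
      by simp
  qed
  then have "u (embed_slice t0 f0) = 0"
    using fun_space.independentD[OF indep \<open>finite S\<close>, of "\<lambda>f. u (embed_slice t0 f)"] w w0
    by (auto simp: S_def)
  then show "u w = 0"
    using w0 by simp
qed

lemma dim_slicewise:
  fixes V :: "('i \<Rightarrow> 'f::field) set" and K :: "'k set"
  assumes "finite K" "0 \<in> V"
  shows "fun_space.dim (slicewise V K) = card K * fun_space.dim V"
proof -
  obtain B where B: "B \<subseteq> V" "fun_space.independent B" "V \<subseteq> fun_space.span B"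
    "card B = fun_space.dim V"
    by (rule fun_space.basis_exists)
  have "0 \<notin> B"
    using B(2) fun_space.dependent_zero by blast
  show ?thesis
    using fun_space.dim_unique[OF embed_slices_subset_slicewise[OF B(1) assms(2)]
        slicewise_subset_span[OF assms(1) B(3)] independent_embed_slices[OF B(2)]]
    by (simp add: card_embed_slices[OF \<open>0 \<notin> B\<close>] B(4))
qed

definition kind_choices :: "nat \<Rightarrow> (nat \<Rightarrow> vkind) set" where
  "kind_choices n = {..<n} \<rightarrow>\<^sub>E (UNIV :: vkind set)"

lemma UNIV_vkind: "(UNIV :: vkind set) = {Y0, Z0, Y1, Z1}"
  using vkind.exhaust by auto

lemma finite_kind_choices: "finite (kind_choices n)"
  unfolding kind_choices_def UNIV_vkind by (simp add: finite_PiE)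

lemma card_kind_choices: "card (kind_choices n) = 4 ^ n"
proof -
  have "card (UNIV :: vkind set) = 4"
    unfolding UNIV_vkind by simp
  then show ?thesis
    unfolding kind_choices_def by (simp add: card_funcsetE)
qed

lemma GIdx_eq: "GIdx n = {\<sigma>. \<sigma> permutes {..<n}} \<times> kind_choices n"
  unfolding GIdx_def kind_choices_def ..

lemma finite_GIdx: "finite (GIdx n)"
  unfolding GIdx_eq by (simp add: finite_permutations finite_kind_choices)

lemma GPn_eq_slicewise: "GPn n = slicewise (Pn n) (kind_choices n)"
  unfolding GPn_def slicewise_def Pn_def GIdx_eq slice_def by auto

lemma eval_grs_eq_sum_eval_ord:
  "eval_grs smul n g b = (\<Sum>t\<in>kind_choices n. eval_ord smul n (slice t g) (\<lambda>i. b i (t i)))"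
proof -
  have "eval_grs smul n g b = (\<Sum>\<sigma>\<in>{\<sigma>. \<sigma> permutes {..<n}}. \<Sum>t\<in>kind_choices n.
      smul (g (\<sigma>, t)) (mprod (map (\<lambda>j. b (\<sigma> j) (t (\<sigma> j))) [0..<n])))"
    unfolding eval_grs_def GIdx_eq sum.cartesian_product by simp
  also have "\<dots> = (\<Sum>t\<in>kind_choices n. \<Sum>\<sigma>\<in>{\<sigma>. \<sigma> permutes {..<n}}.
      smul (g (\<sigma>, t)) (mprod (map (\<lambda>j. b (\<sigma> j) (t (\<sigma> j))) [0..<n])))"
    by (rule sum.swap)
  finally show ?thesis
    by (simp add: eval_ord_def slice_def)
qed

lemma slicewise_IdPn_subset_IdGPn:
  "slicewise (IdPn smul n) (kind_choices n) \<subseteq> IdGPn smul A0 A1 sh n"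
proof
  fix g assume g: "g \<in> slicewise (IdPn smul n) (kind_choices n)"
  then have "g \<in> GPn n"
    unfolding GPn_eq_slicewise slicewise_def IdPn_def by auto
  moreover have "eval_grs smul n g b = 0" for b
    using g unfolding eval_grs_eq_sum_eval_ord
    by (intro sum.neutral) (auto simp: slicewise_def IdPn_def)
  ultimately show "g \<in> IdGPn smul A0 A1 sh n"
    unfolding IdGPn_def by auto
qed

lemma zero_in_IdPn:
  assumes "vector_space smul"
  shows "0 \<in> IdPn smul n"
proof -
  interpret vector_space smul by (fact assms)
  show ?thesis
    unfolding IdPn_def Pn_def eval_ord_def by simp
qed

theorem lemma2p2:
  fixes smul :: "'f::field_char_0 \<Rightarrow> 'a::ring \<Rightarrow> 'a"
    and A0 A1 :: "'a set" and sh :: "'a \<Rightarrow> 'a" and n :: nat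
  assumes "sharp_superalgebra smul A0 A1 sh"
    and "n \<ge> 1"
  shows "cn_grs smul A0 A1 sh n \<le> 4 ^ n * cn smul n"
proof -
  have "0 \<in> IdPn smul n"
    using assms(1) by (simp add: sharp_superalgebra_def zero_in_IdPn)
  have dim_GPn: "fun_space.dim (GPn n :: (_ \<Rightarrow> 'f) set)
      = 4 ^ n * fun_space.dim (Pn n :: (_ \<Rightarrow> 'f) set)"
    unfolding GPn_eq_slicewise
    by (simp add: dim_slicewise finite_kind_choices card_kind_choices Pn_def)
  have "4 ^ n * fun_space.dim (IdPn smul n)
      = fun_space.dim (slicewise (IdPn smul n) (kind_choices n))"
    by (simp add: dim_slicewise finite_kind_choices card_kind_choices \<open>0 \<in> IdPn smul n\<close>)
  also have "\<dots> \<le> fun_space.dim (IdGPn smul A0 A1 sh n)"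
  proof (rule fun_space.dim_subset_finite_span[OF slicewise_IdPn_subset_IdGPn])
    show "IdGPn smul A0 A1 sh n \<subseteq> fun_space.span ((\<lambda>s x. if x = s then 1 else 0) ` GIdx n)"
      using finite_support_subset_span[OF finite_GIdx] by (auto simp: IdGPn_def GPn_def)
  qed (simp add: finite_GIdx)
  finally show ?thesis
    using dim_GPn by (simp add: cn_grs_def cn_def fdim_eq_dim diff_mult_distrib2)
qed

end
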